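(* Every 2-regular graph $G=(V,E)$ on a finite vertex set $V$ with $|V|$ even is B-factorizable.
   Context: Let $V$ be a finite set with $|V|$ even. $K=\binom{V}{2}$ is the set of 2-element subsets of $V$. An equal partition of $V$ is an unordered pair $\{H,A\}$ of disjoint subsets with $H\cup A=V$ and $|H|=|A|=|V|/2$; $C=C(V)$ is the set of equal partitions. For $c=\{H,A\}\in C$, $B_c$ is the complete bipartite graph with parts $H$ and $A$. Vectors live in $\mathbb N^{K\cup C}$ with $\mathbb N=\{0,1,2,\dots\}$; $v|_K$ denotes the restriction to coordinates in $K$. For $E\subseteq K$, $\chi_E\in\{0,1\}^K$ is its indicator vector. For $E\subseteq K$ and $c\in C$, $\chi_{E,c}\in\mathbb N^{K\cup C}$ has $K$-components $\chi_E$ and $C$-components equal to the indicator of $c$. $PM(V)=\{\chi_{q,c}: c\in C,\ q\text{ a perfect matching of }B_c\}$. For $\mathcal M\subseteq\mathbb N^{K\cup C}$, $\mathbf N(\mathcal M)$ is the set of finite nonnegative integer combinations of elements of $\mathcal M$, and $\overline{\mathbf N}(\mathcal M)=\{v\in\mathbb N^{K\cup C}: kv\in\mathbf N(\mathcal M)\text{ for some integer }k\ge1\}$. A regular graph $G=(V,E)$ is B-factorizable if every $v\in\overline{\mathbf N}(PM(V))$ with $v|_K=\chi_E$ belongs to $\mathbf N(PM(V))$. *)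

theory Defs
  imports Main
begin

text \<open>Coordinates: Inl e for e in K (2-subsets of V), Inr c for c in C (equal partitions).
  A vector in N^(K \<union> C) is a function from coordinates to nat, vanishing outside K \<union> C.\<close>

type_synonym 'a coord = "'a set + 'a set set"
type_synonym 'a vec = "'a coord \<Rightarrow> nat"

definition Kset :: "'a set \<Rightarrow> 'a set set" where
  "Kset V = {e. e \<subseteq> V \<and> card e = 2}"

definition equal_partitions :: "'a set \<Rightarrow> 'a set set set" where
  "equal_partitions V = {{H, A} | H A. H \<subseteq> V \<and> A \<subseteq> V \<and> H \<inter> A = {} \<and> H \<union> A = V
      \<and> card H = card V div 2 \<and> card A = card V div 2}"

definition coords :: "'a set \<Rightarrow> 'a coord set" where
  "coords V = Inl ` Kset V \<union> Inr ` equal_partitions V"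

definition vecs :: "'a set \<Rightarrow> 'a vec set" where
  "vecs V = {v. \<forall>i. i \<notin> coords V \<longrightarrow> v i = 0}"

definition bip_edges :: "'a set set \<Rightarrow> 'a set set" where
  "bip_edges c = {{x, y} | x y. \<exists>H A. c = {H, A} \<and> H \<inter> A = {} \<and> x \<in> H \<and> y \<in> A}"

definition perfect_matching_of :: "'a set \<Rightarrow> 'a set set \<Rightarrow> 'a set set \<Rightarrow> bool" where
  "perfect_matching_of V F q \<longleftrightarrow> q \<subseteq> F \<and> (\<forall>x\<in>V. \<exists>!e. e \<in> q \<and> x \<in> e)"

definition chi :: "'a set set \<Rightarrow> 'a set set \<Rightarrow> 'a vec" where
  "chi E c = (\<lambda>i. case i of Inl e \<Rightarrow> (if e \<in> E then 1 else 0)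
                           | Inr d \<Rightarrow> (if d = c then 1 else 0))"

definition PM :: "'a set \<Rightarrow> 'a vec set" where
  "PM V = {chi q c | q c. c \<in> equal_partitions V \<and> perfect_matching_of V (bip_edges c) q}"

definition Ncomb :: "'a vec set \<Rightarrow> 'a vec set" where
  "Ncomb M = {v. \<exists>S (coef::'a vec \<Rightarrow> nat). finite S \<and> S \<subseteq> M \<and> (\<forall>i. v i = (\<Sum>m\<in>S. coef m * m i))}"

definition Nbar :: "'a set \<Rightarrow> 'a vec set \<Rightarrow> 'a vec set" where
  "Nbar V M = {v \<in> vecs V. \<exists>k::nat. k \<ge> 1 \<and> (\<lambda>i. k * v i) \<in> Ncomb M}"

definition B_factorizable :: "'a set \<Rightarrow> 'a set set \<Rightarrow> bool" where
  "B_factorizable V E \<longleftrightarrow>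
     (\<forall>v \<in> Nbar V (PM V).
        (\<forall>e \<in> Kset V. v (Inl e) = (if e \<in> E then 1 else 0)) \<longrightarrow> v \<in> Ncomb (PM V))"

definition two_regular :: "'a set \<Rightarrow> 'a set set \<Rightarrow> bool" where
  "two_regular V E \<longleftrightarrow> E \<subseteq> Kset V \<and> (\<forall>x\<in>V. card {e \<in> E. x \<in> e} = 2)"

end

theory Submission
  imports Defs
begin

(* Let G = (V, E) be 2-regular and let v be a rational point of the cone generated by PM(V)
   whose K-part is the edge indicator of E; clearing denominators, k v = sum of coef(m) m over
   a finite set S of perfect-matching vectors.  Every perfect-matching vector has exactly one
   edge at each vertex and exactly one partition coordinate, so counting at a vertex x (of
   degree 2) shows that the partition coordinates of v sum to 2:  v|C = [c1] + [c2].

   If c1 = c2, every edge of E lies in a matching of S, all of which live in B_c1; any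
   matching P of S then splits E into the perfect matchings P and E - P of B_c1.
   If c1 <> c2, let h(e) be the number of times (with multiplicity) e is used by the matchings
   of S with partition c1.  At each vertex the two edges of E satisfy h(e1) + h(e2) = k, edges
   with h > 0 lie in B_c1 and edges with h < k lie in B_c2.  Rounding (take the edges with
   h > k/2, breaking ties by a perfect matching P) gives a perfect matching Q of E with
   Q in B_c1 and E - Q in B_c2.  In both cases v = chi(Q, c1) + chi(E - Q, c2) lies in N(PM(V)). *)

section \<open>Perfect-matching vectors\<close>

lemma finite_Kset: "finite V \<Longrightarrow> finite (Kset V)"
  by (rule finite_subset[of _ "Pow V"]) (auto simp: Kset_def)

lemma finite_equal_partitions: "finite V \<Longrightarrow> finite (equal_partitions V)"
  by (rule finite_subset[of _ "Pow (Pow V)"]) (auto simp: equal_partitions_def)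

lemma bip_edges_subset_Kset:
  assumes "c \<in> equal_partitions V"
  shows "bip_edges c \<subseteq> Kset V"
proof
  fix e assume "e \<in> bip_edges c"
  then obtain x y H A where e: "e = {x, y}" "c = {H, A}" "H \<inter> A = {}" "x \<in> H" "y \<in> A"
    unfolding bip_edges_def by blast
  from assms obtain H' A' where c: "c = {H', A'}" "H' \<subseteq> V" "A' \<subseteq> V"
    unfolding equal_partitions_def by blast
  have "H \<subseteq> V" "A \<subseteq> V" using e(2) c by (auto simp: doubleton_eq_iff)
  moreover have "x \<noteq> y" using e by blast
  ultimately show "e \<in> Kset V" using e by (auto simp: Kset_def)
qed

lemma chi_Inl [simp]: "chi q c (Inl e) = (if e \<in> q then 1 else 0)"
  by (simp add: chi_def)

lemma chi_Inr [simp]: "chi q c (Inr d) = (if d = c then 1 else 0)"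
  by (simp add: chi_def)

lemma PM_elim:
  assumes "m \<in> PM V"
  obtains q c where "m = chi q c" "c \<in> equal_partitions V" "perfect_matching_of V (bip_edges c) q"
  using assms unfolding PM_def by blast

lemma chi_in_PM:
  assumes "c \<in> equal_partitions V" "perfect_matching_of V E q" "q \<subseteq> bip_edges c"
  shows "chi q c \<in> PM V"
  using assms unfolding PM_def perfect_matching_of_def by blast

lemma PM_vertex_sum:
  assumes "finite V" "m \<in> PM V" "x \<in> V"
  shows "(\<Sum>e\<in>{e \<in> Kset V. x \<in> e}. m (Inl e)) = 1"
proof -
  obtain q c where m: "m = chi q c" "c \<in> equal_partitions V"
    and pm: "perfect_matching_of V (bip_edges c) q"
    using assms(2) by (rule PM_elim)
  have "q \<subseteq> Kset V"
    using pm bip_edges_subset_Kset[OF m(2)] unfolding perfect_matching_of_def by blast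
  moreover obtain e0 where "e0 \<in> q" "x \<in> e0" "\<And>e. e \<in> q \<Longrightarrow> x \<in> e \<Longrightarrow> e = e0"
    using pm assms(3) unfolding perfect_matching_of_def by blast
  ultimately have "{e \<in> Kset V. x \<in> e} \<inter> q = {e0}" by blast
  then show ?thesis using finite_Kset[OF assms(1)] m(1) by (simp add: sum.If_cases)
qed

lemma PM_partition_coord: "m \<in> PM V \<Longrightarrow> m (Inr d) = 0 \<or> m (Inr d) = 1"
  by (erule PM_elim) simp

lemma PM_partition_sum:
  assumes "finite V" "m \<in> PM V"
  shows "(\<Sum>d\<in>equal_partitions V. m (Inr d)) = 1"
proof -
  obtain q c where "m = chi q c" "c \<in> equal_partitions V" using assms(2) by (rule PM_elim)
  then show ?thesis using finite_equal_partitions[OF assms(1)] by simp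
qed

section \<open>Integer combinations\<close>

lemma Ncomb_scale:
  assumes "m \<in> M"
  shows "(\<lambda>i. n * m i) \<in> Ncomb M"
  unfolding Ncomb_def using assms
  by (intro CollectI exI[of _ "{m}"] exI[of _ "\<lambda>_. n"]) simp

lemma Ncomb_pair:
  assumes "a \<in> M" "b \<in> M"
  shows "(\<lambda>i. a i + b i) \<in> Ncomb M"
proof -
  define coef :: "'a vec \<Rightarrow> nat"
    where "coef m = (if m = a then 1 else 0) + (if m = b then 1 else 0)" for m
  have "\<forall>i. a i + b i = (\<Sum>m\<in>{a, b}. coef m * m i)"
    by (cases "a = b") (simp_all add: coef_def)
  moreover have "finite {a, b}" "{a, b} \<subseteq> M" using assms by auto
  ultimately show ?thesis unfolding Ncomb_def by blast
qed

lemma sum_eq_two_nat: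
  fixes f :: "'b \<Rightarrow> nat"
  assumes "finite A" "sum f A = 2"
  obtains a b where "a \<in> A" "b \<in> A"
    "\<And>d. d \<in> A \<Longrightarrow> f d = (if d = a then 1 else 0) + (if d = b then 1 else 0)"
proof -
  obtain a where a: "a \<in> A" "0 < f a" using sum_SucD[of f A 1] assms(2) by auto
  define g where "g d = f d - (if d = a then 1 else 0)" for d
  have "sum f A = sum g A + 1"
    using assms(1) a unfolding g_def
    by (simp add: sum.remove[of A a] sum.remove[of A a "\<lambda>d. f d - (if d = a then 1 else 0)"])
  then have "sum g A = 1" using assms(2) by simp
  then obtain b where b: "b \<in> A" "g b = 1" "\<And>d. d \<in> A \<Longrightarrow> d \<noteq> b \<Longrightarrow> g d = 0"
    unfolding sum_eq_1_iff[OF assms(1)] by metis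
  have "f d = (if d = a then 1 else 0) + (if d = b then 1 else 0)" if "d \<in> A" for d
    using a(2) b(2) b(3)[OF that] unfolding g_def by (cases "d = a"; cases "d = b") auto
  with a(1) b(1) show ?thesis by (rule that)
qed

lemma equal_partitions_empty: "equal_partitions ({}::'a set) = {{{}}}"
proof (rule equalityI)
  show "equal_partitions ({}::'a set) \<subseteq> {{{}}}"
  proof
    fix c assume "c \<in> equal_partitions ({}::'a set)"
    then obtain H A :: "'a set" where "c = {H, A}" "H \<subseteq> {}" "A \<subseteq> {}"
      unfolding equal_partitions_def by blast
    then show "c \<in> {{{}}}" by simp
  qed
  have "{{}} \<in> equal_partitions ({}::'a set)"
    unfolding equal_partitions_def
    by (rule CollectI, rule exI[of _ "{}"], rule exI[of _ "{}"]) simp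
  then show "{{{}}} \<subseteq> equal_partitions ({}::'a set)" by simp
qed

lemma Ncomb_PM_empty:
  assumes "v \<in> vecs ({}::'a set)"
  shows "v \<in> Ncomb (PM ({}::'a set))"
proof -
  let ?m = "chi ({}::'a set set) {{}}"
  have m: "?m \<in> PM {}"
    unfolding PM_def
    by (rule CollectI, rule exI[of _ "{}"], rule exI[of _ "{{}}"])
      (simp add: perfect_matching_of_def equal_partitions_empty)
  have coords: "coords ({}::'a set) = {Inr {{}}}"
    unfolding coords_def equal_partitions_empty Kset_def by auto
  have "v = (\<lambda>i. v (Inr {{}}) * ?m i)"
  proof
    fix i :: "'a coord"
    show "v i = v (Inr {{}}) * ?m i"
    proof (cases "i = Inr {{}}")
      case False
      then have "v i = 0" using assms coords unfolding vecs_def by blast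
      moreover have "?m i = 0" using False by (cases i) auto
      ultimately show ?thesis by simp
    qed simp
  qed
  then show ?thesis using Ncomb_scale[OF m] by metis
qed

section \<open>Perfect matchings of 2-regular graphs\<close>

lemma two_regular_incident:
  assumes "two_regular V E" "x \<in> V"
  obtains e1 e2 where "e1 \<noteq> e2" "{e \<in> E. x \<in> e} = {e1, e2}"
  using assms unfolding two_regular_def card_2_iff by blast

lemma exactly_one_incident_edge:
  assumes "{e \<in> E. x \<in> e} = {e1, e2}" "e1 \<noteq> e2" "F \<subseteq> E"
  shows "(\<exists>!e. e \<in> F \<and> x \<in> e) \<longleftrightarrow> (e1 \<in> F \<longleftrightarrow> e2 \<notin> F)"
proof -
  have "e \<in> F \<and> x \<in> e \<longleftrightarrow> e \<in> F \<and> (e = e1 \<or> e = e2)" for e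
    using assms by blast
  then show ?thesis using assms(2) by auto
qed

lemma complement_perfect_matching:
  assumes "two_regular V E" "perfect_matching_of V E Q"
  shows "perfect_matching_of V E (E - Q)"
  unfolding perfect_matching_of_def
proof (intro conjI ballI)
  fix x assume x: "x \<in> V"
  obtain e1 e2 where inc: "e1 \<noteq> e2" "{e \<in> E. x \<in> e} = {e1, e2}"
    using assms(1) x by (rule two_regular_incident)
  have QE: "Q \<subseteq> E" and "\<exists>!e. e \<in> Q \<and> x \<in> e"
    using assms(2) x unfolding perfect_matching_of_def by blast+
  then have "e1 \<in> Q \<longleftrightarrow> e2 \<notin> Q"
    using exactly_one_incident_edge[OF inc(2,1) QE] by simp
  moreover have "e1 \<in> E" "e2 \<in> E" using inc(2) by auto
  ultimately have "e1 \<in> E - Q \<longleftrightarrow> e2 \<notin> E - Q" by simp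
  then show "\<exists>!e. e \<in> E - Q \<and> x \<in> e"
    using exactly_one_incident_edge[OF inc(2,1), of "E - Q"] by simp
qed auto

lemma rounding_perfect_matching:
  fixes h :: "'a set \<Rightarrow> nat"
  assumes "two_regular V E" "perfect_matching_of V E P"
    and "\<And>x. x \<in> V \<Longrightarrow> (\<Sum>e\<in>{e \<in> E. x \<in> e}. h e) = k"
  shows "perfect_matching_of V E {e \<in> E. k < 2 * h e \<or> (2 * h e = k \<and> e \<in> P)}"
    (is "perfect_matching_of V E ?Q")
  unfolding perfect_matching_of_def
proof (intro conjI ballI)
  fix x assume x: "x \<in> V"
  obtain e1 e2 where inc: "e1 \<noteq> e2" "{e \<in> E. x \<in> e} = {e1, e2}"
    using assms(1) x by (rule two_regular_incident)
  have E12: "e1 \<in> E" "e2 \<in> E" using inc(2) by auto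
  have PE: "P \<subseteq> E" and "\<exists>!e. e \<in> P \<and> x \<in> e"
    using assms(2) x unfolding perfect_matching_of_def by blast+
  then have P12: "e1 \<in> P \<longleftrightarrow> e2 \<notin> P"
    using exactly_one_incident_edge[OF inc(2,1) PE] by simp
  have sum12: "h e1 + h e2 = k" using assms(3)[OF x] inc by simp
  have "e1 \<in> ?Q \<longleftrightarrow> e2 \<notin> ?Q"
  proof (cases "e1 \<in> P")
    case True
    then show ?thesis using P12 E12 sum12 by simp linarith
  next
    case False
    then show ?thesis using P12 E12 sum12 by simp linarith
  qed
  then show "\<exists>!e. e \<in> ?Q \<and> x \<in> e"
    using exactly_one_incident_edge[OF inc(2,1), of ?Q] by simp
qed auto

section \<open>Vectors represented by perfect-matching vectors\<close>

locale PM_combination =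
  fixes V :: "'a set" and v :: "'a vec" and k :: nat
    and S :: "'a vec set" and coef :: "'a vec \<Rightarrow> nat"
  assumes finite_V: "finite V" and k_pos: "0 < k"
    and finite_S: "finite S" and S_PM: "S \<subseteq> PM V"
    and combination: "\<And>i. k * v i = (\<Sum>m\<in>S. coef m * m i)"
begin

lemma term_le: "m \<in> S \<Longrightarrow> coef m * m i \<le> k * v i"
  using member_le_sum[of m S "\<lambda>m. coef m * m i"] finite_S combination[of i] by simp

lemma used_support:
  assumes "m \<in> S" "coef m \<noteq> 0" "m i \<noteq> 0"
  shows "v i \<noteq> 0"
proof -
  have "0 < coef m * m i" using assms(2,3) by simp
  also have "\<dots> \<le> k * v i" using assms(1) by (rule term_le)
  finally show ?thesis by simp
qed

lemma used_matching_edge: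
  assumes "m \<in> S" "coef m \<noteq> 0" "m (Inl e) \<noteq> 0"
  obtains c where "c \<in> equal_partitions V" "m (Inr c) = 1" "v (Inr c) \<noteq> 0" "e \<in> bip_edges c"
proof -
  obtain q c where m: "m = chi q c" "c \<in> equal_partitions V"
    and pm: "perfect_matching_of V (bip_edges c) q"
    using assms(1) S_PM by (blast elim: PM_elim)
  have "v (Inr c) \<noteq> 0" using used_support[OF assms(1,2), of "Inr c"] m(1) by simp
  moreover have "e \<in> bip_edges c" using assms(3) m(1) pm unfolding perfect_matching_of_def
    by (auto split: if_splits)
  ultimately show ?thesis using that m by simp
qed

text \<open>Counting the total coefficient at a vertex and over the partitions: the degree of \<open>v\<close>
  at every vertex equals its total partition weight.\<close>
lemma degree_eq_partition_weight:
  assumes "x \<in> V"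
  shows "(\<Sum>e\<in>{e \<in> Kset V. x \<in> e}. v (Inl e)) = (\<Sum>d\<in>equal_partitions V. v (Inr d))"
proof -
  let ?Kx = "{e \<in> Kset V. x \<in> e}"
  have "k * (\<Sum>e\<in>?Kx. v (Inl e)) = (\<Sum>m\<in>S. coef m * (\<Sum>e\<in>?Kx. m (Inl e)))"
    by (simp add: combination sum_distrib_left sum.swap[of _ S])
  also have "\<dots> = (\<Sum>m\<in>S. coef m)"
    using PM_vertex_sum[OF finite_V _ assms] S_PM by (intro sum.cong) auto
  also have "\<dots> = (\<Sum>m\<in>S. coef m * (\<Sum>d\<in>equal_partitions V. m (Inr d)))"
    using PM_partition_sum[OF finite_V] S_PM by (intro sum.cong) auto
  also have "\<dots> = k * (\<Sum>d\<in>equal_partitions V. v (Inr d))"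
    by (simp add: combination sum_distrib_left sum.swap[of _ S])
  finally show ?thesis using k_pos by simp
qed

definition weight :: "'a set set \<Rightarrow> 'a set \<Rightarrow> nat" where
  "weight c e = (\<Sum>m\<in>S. coef m * m (Inr c) * m (Inl e))"

lemma weight_vertex_sum:
  assumes "x \<in> V"
  shows "(\<Sum>e\<in>{e \<in> Kset V. x \<in> e}. weight c e) = k * v (Inr c)"
proof -
  have "(\<Sum>e\<in>{e \<in> Kset V. x \<in> e}. weight c e)
      = (\<Sum>m\<in>S. coef m * m (Inr c) * (\<Sum>e\<in>{e \<in> Kset V. x \<in> e}. m (Inl e)))"
    unfolding weight_def by (simp add: sum_distrib_left sum.swap[of _ S])
  also have "\<dots> = (\<Sum>m\<in>S. coef m * m (Inr c))"
    using PM_vertex_sum[OF finite_V _ assms] S_PM by (intro sum.cong) auto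
  finally show ?thesis by (simp add: combination)
qed

lemma weight_le: "weight c e \<le> k * v (Inl e)"
  unfolding weight_def combination
proof (rule sum_mono)
  fix m assume "m \<in> S"
  then have "m (Inr c) = 0 \<or> m (Inr c) = 1" using S_PM PM_partition_coord by blast
  then show "coef m * m (Inr c) * m (Inl e) \<le> coef m * m (Inl e)" by auto
qed

lemma weight_pos_bip_edges:
  assumes "weight c e \<noteq> 0"
  shows "e \<in> bip_edges c"
proof -
  obtain m where m: "m \<in> S" "coef m * m (Inr c) * m (Inl e) \<noteq> 0"
    using assms unfolding weight_def by (rule sum.not_neutral_contains_not_neutral)
  obtain q c' where "m = chi q c'" "perfect_matching_of V (bip_edges c') q"
    using m(1) S_PM by (blast elim: PM_elim)
  then show ?thesis using m(2) unfolding perfect_matching_of_def by (auto split: if_splits)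
qed

lemma weight_lt:
  assumes "weight c e < k * v (Inl e)"
  obtains m where "m \<in> S" "coef m \<noteq> 0" "m (Inl e) \<noteq> 0" "m (Inr c) = 0"
proof -
  have "\<exists>m\<in>S. coef m \<noteq> 0 \<and> m (Inl e) \<noteq> 0 \<and> m (Inr c) = 0"
  proof (rule ccontr)
    assume none: "\<not> ?thesis"
    have "coef m * m (Inl e) \<le> coef m * m (Inr c) * m (Inl e)" if "m \<in> S" for m
    proof -
      have "m (Inr c) = 0 \<or> m (Inr c) = 1" using that S_PM PM_partition_coord by blast
      then show ?thesis using none that by auto
    qed
    then have "k * v (Inl e) \<le> weight c e"
      unfolding weight_def combination by (rule sum_mono)
    then show False using assms by simp
  qed
  then show ?thesis using that by blast
qed

end

lemma vec_eq_chi_pair: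
  assumes "v \<in> vecs V" "E \<subseteq> Kset V" "Q \<subseteq> E"
    "c1 \<in> equal_partitions V" "c2 \<in> equal_partitions V"
    and "\<And>e. e \<in> Kset V \<Longrightarrow> v (Inl e) = (if e \<in> E then 1 else 0)"
    and "\<And>d. d \<in> equal_partitions V \<Longrightarrow> v (Inr d) = (if d = c1 then 1 else 0) + (if d = c2 then 1 else 0)"
  shows "v = (\<lambda>i. chi Q c1 i + chi (E - Q) c2 i)"
proof
  fix i show "v i = chi Q c1 i + chi (E - Q) c2 i"
  proof (cases "i \<in> coords V")
    case True
    then show ?thesis using assms(3,6,7) unfolding coords_def by auto
  next
    case False
    then have "v i = 0" using assms(1) unfolding vecs_def by blast
    then show ?thesis using False assms(2-5) unfolding coords_def by (cases i) auto
  qed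
qed

locale two_regular_combination = PM_combination +
  fixes E :: "'a set set"
  assumes two_reg: "two_regular V E" and nonempty: "V \<noteq> {}"
    and edge_coords: "\<And>e. e \<in> Kset V \<Longrightarrow> v (Inl e) = (if e \<in> E then 1 else 0)"
begin

lemma E_subset_Kset: "E \<subseteq> Kset V"
  using two_reg unfolding two_regular_def by blast

text \<open>Counting at any vertex of degree 2: the partition coordinates of \<open>v\<close> sum to 2.\<close>
lemma partition_weight: "(\<Sum>d\<in>equal_partitions V. v (Inr d)) = 2"
proof -
  obtain x where x: "x \<in> V" using nonempty by blast
  have "(\<Sum>e\<in>{e \<in> Kset V. x \<in> e}. v (Inl e)) = (\<Sum>e\<in>{e \<in> Kset V. x \<in> e}. if e \<in> E then 1 else 0)"
    by (rule sum.cong) (auto simp: edge_coords)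
  also have "\<dots> = card ({e \<in> Kset V. x \<in> e} \<inter> E)"
    using finite_Kset[OF finite_V] by (simp add: sum.If_cases)
  also have "{e \<in> Kset V. x \<in> e} \<inter> E = {e \<in> E. x \<in> e}"
    using E_subset_Kset by blast
  also have "card {e \<in> E. x \<in> e} = 2"
    using two_reg x unfolding two_regular_def by blast
  finally show ?thesis using degree_eq_partition_weight[OF x] by simp
qed

lemma edge_covered:
  assumes "e \<in> E"
  obtains m where "m \<in> S" "coef m \<noteq> 0" "m (Inl e) \<noteq> 0"
proof -
  have "k * v (Inl e) = k" using assms E_subset_Kset edge_coords by auto
  then have "(\<Sum>m\<in>S. coef m * m (Inl e)) \<noteq> 0" using k_pos combination[of "Inl e"] by simp
  then obtain m where "m \<in> S" "coef m * m (Inl e) \<noteq> 0"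
    by (rule sum.not_neutral_contains_not_neutral)
  then show ?thesis using that by simp
qed

lemma used_matching_in_E:
  assumes "m \<in> S" "coef m \<noteq> 0"
  obtains P c where "m = chi P c" "c \<in> equal_partitions V" "perfect_matching_of V E P"
    "P \<subseteq> bip_edges c"
proof -
  obtain P c where m: "m = chi P c" "c \<in> equal_partitions V"
    and pm: "perfect_matching_of V (bip_edges c) P"
    using assms(1) S_PM by (blast elim: PM_elim)
  have "e \<in> E" if "e \<in> P" for e
  proof -
    have "e \<in> Kset V" using that pm bip_edges_subset_Kset[OF m(2)]
      unfolding perfect_matching_of_def by blast
    moreover have "v (Inl e) \<noteq> 0" using used_support[OF assms, of "Inl e"] that m(1) by simp
    ultimately show ?thesis using edge_coords by (auto split: if_splits)
  qed
  then show ?thesis using that m pm unfolding perfect_matching_of_def by blast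
qed

text \<open>The 2-regular graph has a perfect matching: any used matching of the representation.\<close>
lemma perfect_matching_exists:
  obtains P where "perfect_matching_of V E P"
proof -
  obtain x where "x \<in> V" using nonempty by blast
  with two_reg obtain e1 e2 where "{e \<in> E. x \<in> e} = {e1, e2}"
    by (rule two_regular_incident)
  then have "e1 \<in> E" by blast
  then obtain m where "m \<in> S" "coef m \<noteq> 0" by (rule edge_covered)
  then obtain P c where "m = chi P c" "c \<in> equal_partitions V" "perfect_matching_of V E P"
    "P \<subseteq> bip_edges c"
    by (rule used_matching_in_E)
  then show ?thesis using that by blast
qed

lemma single_partition_split:
  assumes "\<And>d. d \<in> equal_partitions V \<Longrightarrow> v (Inr d) \<noteq> 0 \<Longrightarrow> d = c"
  obtains Q where "perfect_matching_of V E Q" "Q \<subseteq> bip_edges c" "E - Q \<subseteq> bip_edges c"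
proof -
  have E_bip: "E \<subseteq> bip_edges c"
  proof
    fix e assume "e \<in> E"
    then obtain m where "m \<in> S" "coef m \<noteq> 0" "m (Inl e) \<noteq> 0" by (rule edge_covered)
    then obtain d where "d \<in> equal_partitions V" "m (Inr d) = 1" "v (Inr d) \<noteq> 0"
      "e \<in> bip_edges d"
      by (rule used_matching_edge)
    then show "e \<in> bip_edges c" using assms by blast
  qed
  obtain P where P: "perfect_matching_of V E P" by (rule perfect_matching_exists)
  then have "P \<subseteq> E" unfolding perfect_matching_of_def by blast
  then show ?thesis using that[OF P] E_bip by blast
qed

lemma two_partition_split:
  assumes "c1 \<noteq> c2" "c1 \<in> equal_partitions V"
    and vC: "\<And>d. d \<in> equal_partitions V \<Longrightarrow>
      v (Inr d) = (if d = c1 then 1 else 0) + (if d = c2 then 1 else 0)"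
  obtains Q where "perfect_matching_of V E Q" "Q \<subseteq> bip_edges c1" "E - Q \<subseteq> bip_edges c2"
proof -
  let ?h = "weight c1"
  have h_sum: "(\<Sum>e\<in>{e \<in> E. x \<in> e}. ?h e) = k" if x: "x \<in> V" for x
  proof -
    have zero: "\<forall>e\<in>{e \<in> Kset V. x \<in> e} - {e \<in> E. x \<in> e}. ?h e = 0"
    proof
      fix e assume "e \<in> {e \<in> Kset V. x \<in> e} - {e \<in> E. x \<in> e}"
      then have "v (Inl e) = 0" using edge_coords by auto
      then show "?h e = 0" using weight_le[of c1 e] by simp
    qed
    have "finite {e \<in> Kset V. x \<in> e}" using finite_Kset[OF finite_V] by simp
    moreover have "{e \<in> E. x \<in> e} \<subseteq> {e \<in> Kset V. x \<in> e}" using E_subset_Kset by blast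
    ultimately have "(\<Sum>e\<in>{e \<in> E. x \<in> e}. ?h e) = (\<Sum>e\<in>{e \<in> Kset V. x \<in> e}. ?h e)"
      using zero by (rule sum.mono_neutral_left)
    also have "\<dots> = k * v (Inr c1)" by (rule weight_vertex_sum[OF x])
    also have "v (Inr c1) = 1" using vC[OF assms(2)] assms(1) by simp
    finally show ?thesis by simp
  qed
  obtain P where P: "perfect_matching_of V E P" by (rule perfect_matching_exists)
  define Q where "Q = {e \<in> E. k < 2 * ?h e \<or> (2 * ?h e = k \<and> e \<in> P)}"
  have "perfect_matching_of V E Q"
    unfolding Q_def by (rule rounding_perfect_matching[OF two_reg P h_sum])
  moreover have "Q \<subseteq> bip_edges c1"
  proof
    fix e assume "e \<in> Q"
    then have "?h e \<noteq> 0" using k_pos unfolding Q_def by auto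
    then show "e \<in> bip_edges c1" by (rule weight_pos_bip_edges)
  qed
  moreover have "E - Q \<subseteq> bip_edges c2"
  proof
    fix e assume e: "e \<in> E - Q"
    then have "2 * ?h e \<le> k" unfolding Q_def by auto
    then have "?h e < k" using k_pos by linarith
    moreover have "v (Inl e) = 1" using e E_subset_Kset edge_coords by auto
    ultimately have "?h e < k * v (Inl e)" by simp
    then obtain m where m: "m \<in> S" "coef m \<noteq> 0" "m (Inl e) \<noteq> 0" "m (Inr c1) = 0"
      by (rule weight_lt)
    from m(1-3) obtain d where d: "d \<in> equal_partitions V" "m (Inr d) = 1" "v (Inr d) \<noteq> 0"
      "e \<in> bip_edges d"
      by (rule used_matching_edge)
    have "d \<noteq> c1" using m(4) d(2) by auto
    then have "d = c2" using vC[OF d(1)] d(3) by (auto split: if_splits)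
    then show "e \<in> bip_edges c2" using d(4) by simp
  qed
  ultimately show ?thesis by (rule that)
qed

lemma decomposition:
  obtains c1 c2 Q where "c1 \<in> equal_partitions V" "c2 \<in> equal_partitions V"
    "\<forall>d\<in>equal_partitions V. v (Inr d) = (if d = c1 then 1 else 0) + (if d = c2 then 1 else 0)"
    "perfect_matching_of V E Q" "Q \<subseteq> bip_edges c1" "E - Q \<subseteq> bip_edges c2"
proof -
  obtain c1 c2 where c: "c1 \<in> equal_partitions V" "c2 \<in> equal_partitions V"
    and vC: "\<And>d. d \<in> equal_partitions V \<Longrightarrow> v (Inr d) = (if d = c1 then 1 else 0) + (if d = c2 then 1 else 0)"
    using sum_eq_two_nat[OF finite_equal_partitions[OF finite_V] partition_weight] by blast
  have vC_all: "\<forall>d\<in>equal_partitions V. v (Inr d) = (if d = c1 then 1 else 0) + (if d = c2 then 1 else 0)"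
    using vC by blast
  show ?thesis
  proof (cases "c1 = c2")
    case True
    have "d = c1" if "d \<in> equal_partitions V" "v (Inr d) \<noteq> 0" for d
      using vC[OF that(1)] that(2) True by (auto split: if_splits)
    then obtain Q where "perfect_matching_of V E Q" "Q \<subseteq> bip_edges c1" "E - Q \<subseteq> bip_edges c1"
      by (rule single_partition_split)
    with that[OF c vC_all] True show ?thesis by blast
  next
    case False
    then obtain Q where "perfect_matching_of V E Q" "Q \<subseteq> bip_edges c1" "E - Q \<subseteq> bip_edges c2"
      using c(1) vC by (rule two_partition_split)
    with that[OF c vC_all] show ?thesis by blast
  qed
qed

lemma in_Ncomb_PM:
  assumes "v \<in> vecs V"
  shows "v \<in> Ncomb (PM V)"
proof -
  obtain c1 c2 Q where c: "c1 \<in> equal_partitions V" "c2 \<in> equal_partitions V"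
    and vC: "\<forall>d\<in>equal_partitions V. v (Inr d) = (if d = c1 then 1 else 0) + (if d = c2 then 1 else 0)"
    and Q: "perfect_matching_of V E Q" "Q \<subseteq> bip_edges c1" "E - Q \<subseteq> bip_edges c2"
    by (rule decomposition)
  have "chi Q c1 \<in> PM V" using chi_in_PM[OF c(1) Q(1,2)] .
  moreover have "chi (E - Q) c2 \<in> PM V"
    using chi_in_PM[OF c(2) complement_perfect_matching[OF two_reg Q(1)] Q(3)] .
  ultimately have "(\<lambda>i. chi Q c1 i + chi (E - Q) c2 i) \<in> Ncomb (PM V)" by (rule Ncomb_pair)
  moreover have "Q \<subseteq> E" using Q(1) unfolding perfect_matching_of_def by blast
  then have "v = (\<lambda>i. chi Q c1 i + chi (E - Q) c2 i)"
    by (rule vec_eq_chi_pair[OF assms E_subset_Kset _ c edge_coords vC[rule_format]])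
  ultimately show ?thesis by simp
qed

end

theorem mainTheorem7:
  fixes V :: "'a set" and E :: "'a set set"
  assumes "finite V" and "even (card V)" and "two_regular V E"
  shows "B_factorizable V E"
  unfolding B_factorizable_def
proof (intro ballI impI)
  fix v assume "v \<in> Nbar V (PM V)" and vE: "\<forall>e\<in>Kset V. v (Inl e) = (if e \<in> E then 1 else 0)"
  then obtain k S coef where vec: "v \<in> vecs V"
    and rep: "k \<ge> 1" "finite S" "S \<subseteq> PM V" "\<forall>i. k * v i = (\<Sum>m\<in>S. coef m * m i)"
    unfolding Nbar_def Ncomb_def by auto
  show "v \<in> Ncomb (PM V)"
  proof (cases "V = {}")
    case True
    then show ?thesis using Ncomb_PM_empty vec by blast
  next
    case False
    have "two_regular_combination V v k S coef E"
      using assms(1,3) False vE rep by unfold_locales auto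
    then show ?thesis using vec by (rule two_regular_combination.in_Ncomb_PM)
  qed
qed

end
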